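(* For all integers $n,r\ge 1$, the diameter of $G(n,r)$ equals $(n-1)r$.
   Context: For integers $n,r\ge 1$, $G(n,r)$ is the simple undirected graph whose vertices are the $n\times n$ matrices with non-negative integer entries all of whose row sums and column sums equal $r$. Let $e_{ij}$ be the $n\times n$ matrix with a $1$ in position $(i,j)$ and $0$ elsewhere, and let $\mathcal{B}=\{\pm(e_{ij}+e_{kl}-e_{il}-e_{kj}) : 1\le i<k\le n,\ 1\le j<l\le n\}$. Two vertices $u,v$ are adjacent iff $u-v\in\mathcal{B}$. The diameter is the maximum over pairs of vertices of the shortest-path distance. *)

theory Defs
  imports Main
begin

text \<open>An n x n integer matrix is represented as a function nat => nat => int,
  indices 0..n-1 (0-based), and entries outside {0..<n} x {0..<n} are required to be 0.\<close>

type_synonym imat = "nat \<Rightarrow> nat \<Rightarrow> int"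

definition emat :: "nat \<Rightarrow> nat \<Rightarrow> imat" where
  "emat i j = (\<lambda>a b. if a = i \<and> b = j then 1 else 0)"

definition vertices :: "nat \<Rightarrow> nat \<Rightarrow> imat set" where
  "vertices n r = {M. (\<forall>a b. (a \<ge> n \<or> b \<ge> n) \<longrightarrow> M a b = 0)
                    \<and> (\<forall>a b. 0 \<le> M a b)
                    \<and> (\<forall>a<n. (\<Sum>b<n. M a b) = int r)
                    \<and> (\<forall>b<n. (\<Sum>a<n. M a b) = int r)}"

definition moves :: "nat \<Rightarrow> imat set" where
  "moves n = {M. \<exists>i k j l s. i < k \<and> k < n \<and> j < l \<and> l < n \<and> (s = 1 \<or> s = -1) \<and>
      M = (\<lambda>a b. s * (emat i j a b + emat k l a b - emat i l a b - emat k j a b))}"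

definition edges :: "nat \<Rightarrow> nat \<Rightarrow> (imat \<times> imat) set" where
  "edges n r = {(u, v). u \<in> vertices n r \<and> v \<in> vertices n r \<and> (\<lambda>a b. u a b - v a b) \<in> moves n}"

definition gdist :: "nat \<Rightarrow> nat \<Rightarrow> imat \<Rightarrow> imat \<Rightarrow> nat" where
  "gdist n r u v = (LEAST m. (u, v) \<in> edges n r ^^ m)"

definition connected_G :: "nat \<Rightarrow> nat \<Rightarrow> bool" where
  "connected_G n r = (\<forall>u\<in>vertices n r. \<forall>v\<in>vertices n r. (u, v) \<in> (edges n r)\<^sup>*)"

definition diameter :: "nat \<Rightarrow> nat \<Rightarrow> nat" where
  "diameter n r = Max {gdist n r u v | u v. u \<in> vertices n r \<and> v \<in> vertices n r}"

end

theory Submission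
  imports Defs
begin

(*
  Swaps have zero row and column sums, so adding a swap to a vertex
  yields a vertex as soon as the two decremented entries are positive.

  Lower bound: the weight of the lower triangle (entries on or below the diagonal)
  changes by at most 1 along an edge.  The scalar matrix rI has weight nr, the
  cyclic permutation matrix scaled by r has weight r, so they are at distance
  at least (n-1)r.

  Upper bound: for vertices u, v let the deficit of u towards v be the total positive
  part of v - u in the first n-1 rows; it is at most (n-1)r.  If u <> v, a greedy
  swap in the first row where u and v differ produces a neighbour of u with smaller
  deficit, so v is reached from u in at most deficit-many steps.
*)

definition swap :: "nat \<Rightarrow> nat \<Rightarrow> nat \<Rightarrow> nat \<Rightarrow> imat" where
  "swap i j k l = (\<lambda>a b. emat i j a b + emat k l a b - emat i l a b - emat k j a b)"

lemma swap_entry: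
  "swap i j k l a b = (if a = i \<and> b = j then 1 else 0) + (if a = k \<and> b = l then 1 else 0)
     - (if a = i \<and> b = l then 1 else 0) - (if a = k \<and> b = j then 1 else 0)"
  by (simp add: swap_def emat_def)

text \<open>Every signed swap with distinct rows and distinct columns is a move; the
  definition of moves only lists the normalised case i < k, j < l.\<close>

lemma swap_in_moves_ordered:
  assumes "i < k" "k < n" "j < l" "l < n" "s = 1 \<or> s = -1"
  shows "(\<lambda>a b. s * swap i j k l a b) \<in> moves n"
  unfolding moves_def swap_def using assms by blast

lemma swap_in_moves:
  assumes "i \<noteq> k" "i < n" "k < n" "j \<noteq> l" "j < n" "l < n" "s = 1 \<or> s = -1"
  shows "(\<lambda>a b. s * swap i j k l a b) \<in> moves n"
proof -
  have swap_rows: "swap i j k l = swap k l i j"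
    by (auto simp: swap_def fun_eq_iff)
  have swap_cols: "(\<lambda>a b. t * swap p q p' q' a b) = (\<lambda>a b. (-t) * swap p q' p' q a b)"
    for t :: int and p q p' q'
    by (auto simp: swap_def fun_eq_iff algebra_simps)
  consider "i < k" "j < l" | "i < k" "l < j" | "k < i" "j < l" | "k < i" "l < j"
    using assms by linarith
  then show ?thesis
  proof cases
    case 1 then show ?thesis using swap_in_moves_ordered assms by blast
  next
    case 2 then show ?thesis
      unfolding swap_cols[of s i j k l]
      using swap_in_moves_ordered[of i k n l j "-s"] assms by auto
  next
    case 3 then show ?thesis
      unfolding swap_rows swap_cols[of s k l i j]
      using swap_in_moves_ordered[of k i n j l "-s"] assms by auto
  next
    case 4 then show ?thesis
      unfolding swap_rows using swap_in_moves_ordered[of k i n l j s] assms by auto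
  qed
qed

lemma emat_row_sum: "q < n \<Longrightarrow> (\<Sum>b<n. emat p q a b) = (if a = p then 1 else 0)"
  by (simp add: emat_def)

lemma emat_col_sum: "p < n \<Longrightarrow> (\<Sum>a<n. emat p q a b) = (if b = q then 1 else 0)"
  by (simp add: emat_def)

lemma swap_row_sum: "j < n \<Longrightarrow> l < n \<Longrightarrow> (\<Sum>b<n. swap i j k l a b) = 0"
  by (simp add: swap_def sum.distrib sum_subtractf emat_row_sum)

lemma swap_col_sum: "i < n \<Longrightarrow> k < n \<Longrightarrow> (\<Sum>a<n. swap i j k l a b) = 0"
  by (simp add: swap_def sum.distrib sum_subtractf emat_col_sum)

lemma vertex_outside: "u \<in> vertices n r \<Longrightarrow> n \<le> a \<or> n \<le> b \<Longrightarrow> u a b = 0"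
  by (auto simp: vertices_def)

lemma vertex_add_swap:
  assumes u: "u \<in> vertices n r" and idx: "i < n" "k < n" "j < n" "l < n"
    and pos: "i \<noteq> k" "j \<noteq> l" "0 < u i l" "0 < u k j"
  shows "(\<lambda>a b. u a b + swap i j k l a b) \<in> vertices n r"
  unfolding vertices_def
proof (intro CollectI conjI allI impI)
  fix a b
  show "n \<le> a \<or> n \<le> b \<Longrightarrow> u a b + swap i j k l a b = 0"
    using vertex_outside[OF u] idx by (auto simp: swap_entry)
  show "0 \<le> u a b + swap i j k l a b"
    using u pos by (auto simp: swap_entry vertices_def)
next
  fix a assume "a < n"
  then show "(\<Sum>b<n. u a b + swap i j k l a b) = int r"
    using u idx by (simp add: sum.distrib swap_row_sum vertices_def)
next
  fix b assume "b < n"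
  then show "(\<Sum>a<n. u a b + swap i j k l a b) = int r"
    using u idx by (simp add: sum.distrib swap_col_sum vertices_def)
qed

lemma edge_add_swap:
  assumes "u \<in> vertices n r" "(\<lambda>a b. u a b + swap i j k l a b) \<in> vertices n r"
    and "i \<noteq> k" "i < n" "k < n" "j \<noteq> l" "j < n" "l < n"
  shows "(u, \<lambda>a b. u a b + swap i j k l a b) \<in> edges n r"
proof -
  have "(\<lambda>a b. u a b - (u a b + swap i j k l a b)) = (\<lambda>a b. (-1) * swap i j k l a b)"
    by simp
  then show ?thesis
    using assms swap_in_moves[of i k n j l "-1"] by (simp add: edges_def)
qed

section \<open>Lower bound: the lower-triangle weight\<close>

text \<open>The sum of the entries on or below the diagonal.  It is additive and
  homogeneous, so its change along an edge is its value on a move.\<close>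

definition lower_weight :: "nat \<Rightarrow> imat \<Rightarrow> int" where
  "lower_weight n M = (\<Sum>a<n. \<Sum>b<n. if b \<le> a then M a b else 0)"

lemma lower_weight_diff:
  "lower_weight n (\<lambda>a b. x a b - y a b) = lower_weight n x - lower_weight n y"
proof -
  have "(if b \<le> a then x a b - y a b else 0)
      = (if b \<le> a then x a b else 0) - (if b \<le> a then y a b else (0::int))" for a b
    by simp
  then show ?thesis unfolding lower_weight_def by (simp add: sum_subtractf)
qed

lemma lower_weight_scale: "lower_weight n (\<lambda>a b. s * M a b) = s * lower_weight n M"
proof -
  have "(if b \<le> a then s * M a b else 0) = s * (if b \<le> a then M a b else 0)" for a b
    by simp
  then show ?thesis unfolding lower_weight_def by (simp add: sum_distrib_left)
qed

text \<open>A swap with rows i < k and columns j < l has lower-triangle weight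
  t_ij + t_kl - t_il - t_kj, t the 0/1 indicator of the lower triangle; this lies
  in [-1,1] because t is monotone in both indices.\<close>

lemma lower_weight_move:
  assumes "d \<in> moves n"
  shows "\<bar>lower_weight n d\<bar> \<le> 1"
proof -
  obtain i k j l s where idx: "i < k" "k < n" "j < l" "l < n" and sign: "s = 1 \<or> s = -1"
    and d: "d = (\<lambda>a b. s * swap i j k l a b)"
    using assms unfolding moves_def swap_def by blast
  define t where "t p q = (if q \<le> p then (1::int) else 0)" for p q :: nat
  have triangle: "(if b \<le> a then swap i j k l a b else 0)
     = ((if b = j then (if a = i then t i j else 0) else 0)
         + (if b = l then (if a = k then t k l else 0) else 0))
       - (if b = l then (if a = i then t i l else 0) else 0)
       - (if b = j then (if a = k then t k j else 0) else 0)" for a b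
    by (auto simp: swap_entry t_def)
  have "lower_weight n (swap i j k l) = t i j + t k l - t i l - t k j"
    unfolding lower_weight_def triangle using idx by (simp add: sum.distrib sum_subtractf)
  moreover have "\<bar>t i j + t k l - t i l - t k j\<bar> \<le> 1"
    using idx by (auto simp: t_def)
  ultimately show ?thesis
    using sign by (auto simp: d lower_weight_scale abs_mult)
qed

lemma lower_weight_walk:
  "(x, y) \<in> edges n r ^^ m \<Longrightarrow> \<bar>lower_weight n x - lower_weight n y\<bar> \<le> int m"
proof (induction m arbitrary: y)
  case 0 then show ?case by simp
next
  case (Suc m)
  then obtain z where walk: "(x, z) \<in> edges n r ^^ m" and edge: "(z, y) \<in> edges n r"
    by auto
  have "\<bar>lower_weight n z - lower_weight n y\<bar> \<le> 1"
    using edge lower_weight_move[of "\<lambda>a b. z a b - y a b" n]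
    by (simp add: edges_def lower_weight_diff)
  with Suc.IH[OF walk] show ?case by simp
qed

definition scalar_vertex :: "nat \<Rightarrow> nat \<Rightarrow> imat" where
  "scalar_vertex n r = (\<lambda>a b. if a < n \<and> b = a then int r else 0)"

definition cycle_vertex :: "nat \<Rightarrow> nat \<Rightarrow> imat" where
  "cycle_vertex n r = (\<lambda>a b. if a < n \<and> b = (Suc a) mod n then int r else 0)"

lemma scalar_vertex_in_vertices: "scalar_vertex n r \<in> vertices n r"
  unfolding vertices_def
proof (intro CollectI conjI allI impI)
  fix a assume a: "a < n"
  have "(\<Sum>b<n. scalar_vertex n r a b) = (\<Sum>b<n. if b = a then int r else 0)"
    using a by (intro sum.cong) (auto simp: scalar_vertex_def)
  then show "(\<Sum>b<n. scalar_vertex n r a b) = int r" using a by simp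
next
  fix b assume b: "b < n"
  have "(\<Sum>a<n. scalar_vertex n r a b) = (\<Sum>a<n. if a = b then int r else 0)"
    using b by (intro sum.cong) (auto simp: scalar_vertex_def)
  then show "(\<Sum>a<n. scalar_vertex n r a b) = int r" using b by simp
qed (auto simp: scalar_vertex_def)

lemma cycle_vertex_in_vertices:
  assumes "1 \<le> n" shows "cycle_vertex n r \<in> vertices n r"
proof -
  have "0 < n" using assms by simp
  then have successor: "Suc a mod n < n" "\<not> n \<le> Suc a mod n" for a
    by (simp_all add: not_le)
  show ?thesis
    unfolding vertices_def
  proof (intro CollectI conjI allI impI)
    fix a assume a: "a < n"
    show "(\<Sum>b<n. cycle_vertex n r a b) = int r"
      using a successor(1)[of a] by (simp add: cycle_vertex_def cong: if_cong)
  next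
    fix b assume b: "b < n"
    define p where "p = (if b = 0 then n - 1 else b - 1)"
    have "p < n" "\<And>a. a < n \<Longrightarrow> (b = Suc a mod n) = (a = p)"
      using b assms by (auto simp: p_def mod_Suc)
    then show "(\<Sum>a<n. cycle_vertex n r a b) = int r"
      by (simp add: cycle_vertex_def cong: if_cong)
  qed (use successor in \<open>auto simp: cycle_vertex_def\<close>)
qed

text \<open>Every row of r times the identity meets the lower triangle in weight r.\<close>

lemma lower_weight_scalar_vertex: "lower_weight n (scalar_vertex n r) = int n * int r"
proof -
  have "(\<Sum>b<n. if b \<le> a then scalar_vertex n r a b else 0) = int r" if "a < n" for a
  proof -
    have "(\<Sum>b<n. if b \<le> a then scalar_vertex n r a b else 0) = (\<Sum>b<n. if b = a then int r else 0)"
      using that by (intro sum.cong) (auto simp: scalar_vertex_def)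
    then show ?thesis using that by simp
  qed
  then show ?thesis unfolding lower_weight_def by simp
qed

text \<open>Only the last row of the cyclic shift meets the lower triangle.\<close>

lemma lower_weight_cycle_vertex:
  assumes "1 \<le> n" shows "lower_weight n (cycle_vertex n r) = int r"
proof -
  have row: "(\<Sum>b<n. if b \<le> a then cycle_vertex n r a b else 0) = (if a = n - 1 then int r else 0)"
    if a: "a < n" for a
  proof -
    have "(\<Sum>b<n. if b \<le> a then cycle_vertex n r a b else 0)
        = (\<Sum>b<n. if b = Suc a mod n then (if Suc a mod n \<le> a then int r else 0) else 0)"
      using a by (intro sum.cong) (auto simp: cycle_vertex_def)
    moreover have "Suc a mod n < n" "(Suc a mod n \<le> a) = (a = n - 1)"
      using a by (auto simp: mod_Suc)
    ultimately show ?thesis by simp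
  qed
  have "lower_weight n (cycle_vertex n r) = (\<Sum>a<n. if a = n - 1 then int r else 0)"
    unfolding lower_weight_def by (intro sum.cong) (auto simp: row)
  with assms show ?thesis by simp
qed

section \<open>Upper bound: greedy descent of the deficit\<close>

definition deficit :: "nat \<Rightarrow> imat \<Rightarrow> imat \<Rightarrow> int" where
  "deficit n v u = (\<Sum>a<n-1. \<Sum>b<n. max 0 (v a b - u a b))"

lemma deficit_nonneg: "0 \<le> deficit n v u"
  unfolding deficit_def by (intro sum_nonneg) auto

text \<open>The deficit is bounded by the total mass of the first n-1 rows of v.\<close>

lemma deficit_le:
  assumes u: "u \<in> vertices n r" and v: "v \<in> vertices n r"
  shows "deficit n v u \<le> int ((n - 1) * r)"
proof -
  have "deficit n v u \<le> (\<Sum>a<n-1. \<Sum>b<n. v a b)"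
    unfolding deficit_def using u v by (intro sum_mono) (auto simp: vertices_def)
  also have "\<dots> = (\<Sum>a<n-1. int r)"
    using v by (intro sum.cong) (auto simp: vertices_def)
  finally show ?thesis by simp
qed

lemma equal_sums_exceed:
  fixes f g :: "'a \<Rightarrow> int"
  assumes "finite A" "sum f A = sum g A" "x \<in> A" "f x < g x"
  shows "\<exists>y\<in>A. g y < f y"
proof (rule ccontr)
  assume "\<not> ?thesis"
  then have "sum f A < sum g A"
    using assms by (intro sum_strict_mono_ex1) (auto simp: not_less)
  with assms(2) show False by simp
qed

text \<open>Vertices agree in their last row once they agree in all others (column sums),
  so the first row where two distinct vertices differ is one of the first n-1.\<close>

lemma first_differing_row:
  assumes u: "u \<in> vertices n r" and v: "v \<in> vertices n r" and "u \<noteq> v"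
  obtains k where "k < n - 1" "\<exists>b. u k b \<noteq> v k b" "\<And>a b. a < k \<Longrightarrow> u a b = v a b"
proof -
  have ex: "\<exists>a b. u a b \<noteq> v a b" using \<open>u \<noteq> v\<close> by (auto simp: fun_eq_iff)
  define k where "k = (LEAST a. \<exists>b. u a b \<noteq> v a b)"
  have differ: "\<exists>b. u k b \<noteq> v k b" using LeastI_ex[OF ex] unfolding k_def .
  have above: "u a b = v a b" if "a < k" for a b
    using not_less_Least[OF that[unfolded k_def]] by blast
  have "k < n" using differ vertex_outside[OF u] vertex_outside[OF v] by (metis not_less)
  moreover have "k \<noteq> n - 1"
  proof
    assume last: "k = n - 1"
    have "u k b = v k b" for b
    proof (cases "b < n")
      case True
      have "(\<Sum>a<n. u a b) = (\<Sum>a<n. v a b)" using u v True by (simp add: vertices_def)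
      moreover have "{..<n} = insert k {..<k}" using \<open>k < n\<close> last by auto
      moreover have "(\<Sum>a<k. u a b) = (\<Sum>a<k. v a b)" using above by simp
      ultimately show ?thesis by simp
    next
      case False then show ?thesis using vertex_outside[OF u] vertex_outside[OF v] by simp
    qed
    with differ show False by simp
  qed
  ultimately have "k < n - 1" by linarith
  then show ?thesis using that differ above by blast
qed

text \<open>In the first differing row k pick a column j where u is too
  small and a column l where u is too large; in column j some row a below k has u
  too large.  Moving one unit around the rectangle (k,j),(k,l),(a,l),(a,j) decreases
  the deficit at (k,j) and increases it nowhere.\<close>

lemma greedy_step:
  assumes u: "u \<in> vertices n r" and v: "v \<in> vertices n r" and "u \<noteq> v"
  shows "\<exists>u'. (u, u') \<in> edges n r \<and> u' \<in> vertices n r \<and> deficit n v u' < deficit n v u"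
proof -
  obtain k where k: "k < n - 1" and differ: "\<exists>b. u k b \<noteq> v k b"
    and above: "\<And>a b. a < k \<Longrightarrow> u a b = v a b"
    using first_differing_row[OF u v \<open>u \<noteq> v\<close>] by blast
  have "k < n" using k by simp
  have row_k: "(\<Sum>b<n. u k b) = (\<Sum>b<n. v k b)" using u v k by (simp add: vertices_def)
  obtain b0 where b0: "u k b0 \<noteq> v k b0" using differ by blast
  then have "b0 < n" using vertex_outside[OF u] vertex_outside[OF v] by (metis not_less)
  obtain j where j: "j < n" "u k j < v k j"
  proof (cases "u k b0 < v k b0")
    case True then show ?thesis using that \<open>b0 < n\<close> by blast
  next
    case False
    then show ?thesis
      using that b0 \<open>b0 < n\<close> equal_sums_exceed[of "{..<n}" "\<lambda>b. v k b" "\<lambda>b. u k b" b0] row_k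
      by force
  qed
  obtain l where l: "l < n" "v k l < u k l"
    using equal_sums_exceed[of "{..<n}" "\<lambda>b. u k b" "\<lambda>b. v k b" j] row_k j by auto
  obtain a where a: "a < n" "v a j < u a j"
    using equal_sums_exceed[of "{..<n}" "\<lambda>a. u a j" "\<lambda>a. v a j" k] u v j \<open>k < n\<close>
    by (auto simp: vertices_def)
  have "k < a" using a above[of a j] j by (cases "a < k") (auto simp: not_less le_less)
  have jl: "j \<noteq> l" using j l by auto
  have nonneg: "0 \<le> v x y" for x y using v by (simp add: vertices_def)
  define u' where "u' = (\<lambda>x y. u x y + swap a l k j x y)"
  have u': "u' \<in> vertices n r"
    unfolding u'_def using \<open>k < a\<close> a l j k jl nonneg[of k l] nonneg[of a j]
    by (intro vertex_add_swap[OF u]) auto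
  have edge: "(u, u') \<in> edges n r"
    unfolding u'_def using \<open>k < a\<close> a l j k jl u'[unfolded u'_def]
    by (intro edge_add_swap[OF u]) auto
  have no_increase: "max 0 (v x y - u' x y) \<le> max 0 (v x y - u x y)" for x y
    using l a jl \<open>k < a\<close> by (auto simp: u'_def swap_entry)
  have decrease: "max 0 (v k j - u' k j) < max 0 (v k j - u k j)"
    using j jl \<open>k < a\<close> by (auto simp: u'_def swap_entry)
  have row_decrease: "(\<Sum>b<n. max 0 (v k b - u' k b)) < (\<Sum>b<n. max 0 (v k b - u k b))"
    using no_increase decrease j by (intro sum_strict_mono_ex1 bexI[of _ j]) auto
  have "deficit n v u' < deficit n v u"
    unfolding deficit_def
    by (rule sum_strict_mono_ex1)
      (use k row_decrease in \<open>auto intro: sum_mono no_increase bexI[of _ k]\<close>)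
  with edge u' show ?thesis by blast
qed

lemma walk_within_deficit:
  assumes v: "v \<in> vertices n r"
  shows "u \<in> vertices n r \<Longrightarrow> \<exists>m. (u, v) \<in> edges n r ^^ m \<and> int m \<le> deficit n v u"
proof (induction "nat (deficit n v u)" arbitrary: u rule: less_induct)
  case less
  show ?case
  proof (cases "u = v")
    case True then show ?thesis using deficit_nonneg by (intro exI[of _ 0]) auto
  next
    case False
    then obtain u' where edge: "(u, u') \<in> edges n r" and u': "u' \<in> vertices n r"
      and smaller: "deficit n v u' < deficit n v u"
      using greedy_step[OF less.prems v] by blast
    then obtain m where "(u', v) \<in> edges n r ^^ m" "int m \<le> deficit n v u'"
      using less.hyps[OF _ u'] deficit_nonneg[of n v u'] by fastforce
    then have "(u, v) \<in> edges n r ^^ Suc m" "int (Suc m) \<le> deficit n v u"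
      using relpow_Suc_I2[OF edge] smaller by auto
    then show ?thesis by blast
  qed
qed

lemma walk_bound:
  assumes "u \<in> vertices n r" "v \<in> vertices n r"
  shows "\<exists>m. (u, v) \<in> edges n r ^^ m \<and> m \<le> (n - 1) * r"
proof -
  obtain m where "(u, v) \<in> edges n r ^^ m" "int m \<le> deficit n v u"
    using walk_within_deficit assms by blast
  moreover have "deficit n v u \<le> int ((n - 1) * r)" using deficit_le assms by blast
  ultimately have "int m \<le> int ((n - 1) * r)" by linarith
  then have "m \<le> (n - 1) * r" by (simp only: of_nat_le_iff)
  with \<open>(u, v) \<in> edges n r ^^ m\<close> show ?thesis by blast
qed

lemma gdist_le: "(u, v) \<in> edges n r ^^ m \<Longrightarrow> gdist n r u v \<le> m"
  unfolding gdist_def by (rule Least_le)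

lemma gdist_walk: "(u, v) \<in> edges n r ^^ m \<Longrightarrow> (u, v) \<in> edges n r ^^ gdist n r u v"
  unfolding gdist_def by (rule LeastI)

lemma gdist_bound:
  assumes "u \<in> vertices n r" "v \<in> vertices n r"
  shows "gdist n r u v \<le> (n - 1) * r"
proof -
  obtain m where walk: "(u, v) \<in> edges n r ^^ m" and "m \<le> (n - 1) * r"
    using walk_bound[OF assms] by blast
  moreover have "gdist n r u v \<le> m" using walk by (rule gdist_le)
  ultimately show ?thesis by simp
qed

text \<open>The two extremal vertices are at distance exactly (n-1)r, since their
  lower-triangle weights differ by nr - r.\<close>

lemma gdist_extremal:
  assumes "1 \<le> n"
  shows "gdist n r (scalar_vertex n r) (cycle_vertex n r) = (n - 1) * r"
proof (rule antisym)
  let ?u = "scalar_vertex n r" and ?v = "cycle_vertex n r"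
  have u: "?u \<in> vertices n r" and v: "?v \<in> vertices n r"
    using scalar_vertex_in_vertices cycle_vertex_in_vertices assms by auto
  then show "gdist n r ?u ?v \<le> (n - 1) * r" by (rule gdist_bound)
  obtain m where "(?u, ?v) \<in> edges n r ^^ m"
    using walk_bound[OF u v] by blast
  then have "(?u, ?v) \<in> edges n r ^^ gdist n r ?u ?v" by (rule gdist_walk)
  then have "\<bar>lower_weight n ?u - lower_weight n ?v\<bar> \<le> int (gdist n r ?u ?v)"
    by (rule lower_weight_walk)
  moreover have "lower_weight n ?u - lower_weight n ?v = int ((n - 1) * r)"
    using assms by (simp add: lower_weight_scalar_vertex lower_weight_cycle_vertex
        algebra_simps)
  ultimately have "int ((n - 1) * r) \<le> int (gdist n r ?u ?v)" by linarith
  then show "(n - 1) * r \<le> gdist n r ?u ?v" by (simp only: of_nat_le_iff)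
qed

theorem proposition2p10:
  fixes n r :: nat
  assumes "n \<ge> 1" and "r \<ge> 1"
  shows "connected_G n r \<and> diameter n r = (n - 1) * r"
proof
  show "connected_G n r"
    unfolding connected_G_def using walk_bound relpow_imp_rtrancl by blast
  let ?D = "{gdist n r u v | u v. u \<in> vertices n r \<and> v \<in> vertices n r}"
  have upper: "d \<le> (n - 1) * r" if "d \<in> ?D" for d
    using that gdist_bound by auto
  have "gdist n r (scalar_vertex n r) (cycle_vertex n r) \<in> ?D"
    using scalar_vertex_in_vertices cycle_vertex_in_vertices[OF assms(1)]
    by (metis (mono_tags, lifting) mem_Collect_eq)
  then have attained: "(n - 1) * r \<in> ?D"
    by (simp only: gdist_extremal[OF assms(1)])
  have "?D \<subseteq> {..(n - 1) * r}" using upper by auto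
  then have "finite ?D" by (rule finite_subset) simp
  with attained upper show "diameter n r = (n - 1) * r"
    unfolding diameter_def by (intro Max_eqI) auto
qed

end
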